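(* Let $G$ be a finite group, $p$ a prime, and let $P$ be a Sylow $p$-subgroup of $G$. If $P/O_p(G)$ is cyclic, then $G$ does not have a redundant Sylow $p$-subgroup.
   Context: $O_p(G)$ denotes the largest normal $p$-subgroup of $G$. For a finite group $G$ and a prime $p$, $G_p$ denotes the set of $p$-elements of $G$ and $\mathrm{Syl}_p(G)$ the set of Sylow $p$-subgroups of $G$. $G$ is said to have a redundant Sylow $p$-subgroup if $G_p$ is contained in the union of the members of some proper subset of $\mathrm{Syl}_p(G)$. *)

theory Defs
  imports "HOL-Algebra.Algebra" "HOL-Computational_Algebra.Primes"
begin

definition p_subgroup :: "('a, 'b) monoid_scheme \<Rightarrow> nat \<Rightarrow> 'a set \<Rightarrow> bool" where
  "p_subgroup G p H \<longleftrightarrow> subgroup H G \<and> finite H \<and> (\<exists>n. card H = p ^ n)"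

definition Syl :: "('a, 'b) monoid_scheme \<Rightarrow> nat \<Rightarrow> 'a set set" where
  "Syl G p = {P. subgroup P G \<and> card P = p ^ multiplicity p (order G)}"

definition p_elements :: "('a, 'b) monoid_scheme \<Rightarrow> nat \<Rightarrow> 'a set" where
  "p_elements G p = {x \<in> carrier G. \<exists>n. group.ord G x = p ^ n}"

definition O_p :: "('a, 'b) monoid_scheme \<Rightarrow> nat \<Rightarrow> 'a set" where
  "O_p G p = (THE N. N \<lhd> G \<and> p_subgroup G p N \<and>
                 (\<forall>M. M \<lhd> G \<and> p_subgroup G p M \<longrightarrow> M \<subseteq> N))"

definition redundant_sylow :: "('a, 'b) monoid_scheme \<Rightarrow> nat \<Rightarrow> bool" where
  "redundant_sylow G p \<longleftrightarrow> (\<exists>S. S \<subset> Syl G p \<and> p_elements G p \<subseteq> \<Union>S)"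

end

theory Submission
  imports Defs
begin

(* Let N = O_p(G); it lies in every Sylow p-subgroup. If the coset N x generates P/N, then every
   Sylow p-subgroup containing x contains N and x, hence P, hence equals P: the p-element x lies in
   P only. By Sylow's conjugacy theorem each Sylow p-subgroup Q is some g P g^-1, and then the
   p-element g x g^-1 lies in Q only. So no Sylow p-subgroup can be left out of a cover of G_p. *)

lemma (in group_action) fixed_point_of_p_group:
  assumes fin: "finite E" and p: "Factorial_Ring.prime p"
    and order: "order G = p ^ n" and not_dvd: "\<not> p dvd card E"
  shows "\<exists>x\<in>E. \<forall>g\<in>carrier G. \<phi> g x = x"
proof (rule ccontr)
  assume no_fixed: "\<not> ?thesis"
  have "p dvd card orb" if orb: "orb \<in> orbits G E \<phi>" for orb
  proof -
    obtain x where x: "x \<in> E" and orb_eq: "orb = orbit G \<phi> x"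
      using orb unfolding orbits_def by blast
    obtain g where g: "g \<in> carrier G" and moved: "\<phi> g x \<noteq> x"
      using no_fixed x by blast
    have "{x, \<phi> g x} \<subseteq> orb"
      using orb_eq orbit_refl[OF x] g unfolding orbit_def by auto
    moreover have "finite orb"
      using orb_eq element_image[OF _ x] fin unfolding orbit_def
      by (auto intro: finite_subset)
    ultimately have "card orb \<noteq> 1"
      using moved by (metis card_1_singletonE insert_subset singletonD)
    moreover have "card orb dvd p ^ n"
      using orbit_stabilizer_theorem[OF x] order orb_eq by (metis dvd_triv_left)
    then obtain i where "card orb = p ^ i"
      using divides_primepow_nat[OF p] by blast
    ultimately show ?thesis by (cases i) auto
  qed
  then have "p dvd (\<Sum>orb\<in>orbits G E \<phi>. \<Sum>x\<in>orb. (1::nat))"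
    by (simp add: dvd_sum)
  then show False
    using disjoint_sum[OF fin, of "\<lambda>_. 1::nat"] not_dvd by simp
qed

(* Translation by inv g rather than g, so that right translation becomes a left action. *)
lemma (in group) rcosets_translation_action:
  assumes H: "subgroup H G"
  shows "group_action G (rcosets H) (\<lambda>g. \<lambda>Y\<in>rcosets H. Y #> inv g)"
proof -
  have H_sub: "H \<subseteq> carrier G" using H subgroup.subset by blast
  have coset_sub: "Y \<subseteq> carrier G" if "Y \<in> rcosets H" for Y
    using subgroup.rcosets_carrier[OF H is_group that] .
  have closed: "Y #> g \<in> rcosets H" if Y: "Y \<in> rcosets H" and g: "g \<in> carrier G" for Y g
  proof -
    obtain a where a: "a \<in> carrier G" "Y = H #> a" using Y unfolding RCOSETS_def by blast
    then have "Y #> g = H #> (a \<otimes> g)" using g coset_mult_assoc H_sub by simp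
    then show ?thesis using rcosetsI H_sub a g by simp
  qed
  have bij: "(\<lambda>Y\<in>rcosets H. Y #> inv g) \<in> Bij (rcosets H)" if g: "g \<in> carrier G" for g
  proof -
    have "bij_betw (\<lambda>Y. Y #> inv g) (rcosets H) (rcosets H)"
      by (rule bij_betw_byWitness[where f' = "\<lambda>Y. Y #> g"])
        (use coset_sub closed g in \<open>auto simp: coset_mult_assoc\<close>)
    then show ?thesis
      unfolding Bij_def by (simp add: bij_betw_cong[of _ "restrict _ _"])
  qed
  have mult: "(\<lambda>Y\<in>rcosets H. Y #> inv (g \<otimes> h))
      = compose (rcosets H) (\<lambda>Y\<in>rcosets H. Y #> inv g) (\<lambda>Y\<in>rcosets H. Y #> inv h)"
    if g: "g \<in> carrier G" and h: "h \<in> carrier G" for g h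
  proof (rule ext)
    fix Y
    show "(\<lambda>Y\<in>rcosets H. Y #> inv (g \<otimes> h)) Y
        = compose (rcosets H) (\<lambda>Y\<in>rcosets H. Y #> inv g) (\<lambda>Y\<in>rcosets H. Y #> inv h) Y"
      using coset_sub[of Y] closed[of Y "inv h"] g h
      by (simp add: compose_def coset_mult_assoc inv_mult_group)
  qed
  show ?thesis
    unfolding group_action_def group_hom_def group_hom_axioms_def
    using bij mult group_BijGroup by (auto intro!: homI is_group simp: BijGroup_def)
qed

lemma (in second_isomorphism_grp) card_set_mult_mult_card_inter:
  "card (H <#> S) * card (H \<inter> S) = card H * card S"
proof -
  have S_grp: "group (G\<lparr>carrier := S\<rparr>)" using subgrpS subgroup_imp_group by blast
  have HS_sub: "subgroup (H <#> S) G" by (rule normal_set_mult_subgroup)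
  have HS_grp: "group (G\<lparr>carrier := H <#> S\<rparr>)" using HS_sub subgroup_imp_group by blast
  have inter_sub: "subgroup (H \<inter> S) (G\<lparr>carrier := S\<rparr>)"
    using normal_imp_subgroup[OF normal_subgrp_intersection_normal] by (simp add: Int_commute)
  have H_sub: "subgroup H (G\<lparr>carrier := H <#> S\<rparr>)"
    using normal_restrict_supergroup[OF HS_sub normal_axioms H_contained_in_set_mult]
    by (rule normal_imp_subgroup)
  define index where "index = card (rcosets\<^bsub>G\<lparr>carrier := S\<rparr>\<^esub> (H \<inter> S))"
  have card_S: "card S = index * card (H \<inter> S)"
    using group.lagrange[OF S_grp inter_sub] by (simp add: order_def index_def)
  have "(G\<lparr>carrier := S\<rparr>) Mod (H \<inter> S) \<cong> (G\<lparr>carrier := H <#> S\<rparr>) Mod H"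
    using normal_intersection_quotient_isom unfolding is_iso_def by blast
  then have "index = card (rcosets\<^bsub>G\<lparr>carrier := H <#> S\<rparr>\<^esub> H)"
    using iso_same_card unfolding index_def by (fastforce simp: FactGroup_def)
  then have card_HS: "card (H <#> S) = index * card H"
    using group.lagrange[OF HS_grp H_sub] by (simp add: order_def)
  show ?thesis unfolding card_S card_HS by (simp add: ac_simps)
qed

context group
begin

lemma prime_power_subgroup_exponent_le:
  assumes fin: "finite (carrier G)" and p: "Factorial_Ring.prime p"
    and H: "subgroup H G" and card_H: "card H = p ^ k"
  shows "k \<le> multiplicity p (order G)"
proof (rule multiplicity_geI)
  show "p ^ k dvd order G"
    using lagrange[OF H] card_H by (metis dvd_triv_right)
qed (use fin p order_gt_0_iff_finite not_prime_unit in auto)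

lemma Syl_index_not_dvd:
  assumes fin: "finite (carrier G)" and p: "Factorial_Ring.prime p" and P: "P \<in> Syl G p"
  shows "\<not> p dvd card (rcosets P)"
proof
  let ?m = "multiplicity p (order G)"
  assume "p dvd card (rcosets P)"
  then obtain c where "card (rcosets P) = p * c" ..
  moreover have "card (rcosets P) * card P = order G" and "card P = p ^ ?m"
    using lagrange[of P] P unfolding Syl_def by auto
  ultimately have "p ^ Suc ?m dvd order G"
    by (metis dvd_triv_right mult.assoc mult.commute power_Suc)
  then have "Suc ?m \<le> ?m"
    using multiplicity_geI fin p order_gt_0_iff_finite not_prime_unit by blast
  then show False by simp
qed

lemma Syl_subset_eq:
  assumes fin: "finite (carrier G)" and "P \<in> Syl G p" and "Q \<in> Syl G p" and "P \<subseteq> Q"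
  shows "P = Q"
proof (rule card_subset_eq)
  show "finite Q"
    using assms(3) finite_subset[OF _ fin] subgroup.subset unfolding Syl_def by blast
  show "card P = card Q" using assms(2,3) unfolding Syl_def by simp
qed fact

lemma Syl_subset_p_elements:
  assumes p: "Factorial_Ring.prime p" and P: "P \<in> Syl G p"
  shows "P \<subseteq> p_elements G p"
proof
  fix x assume x: "x \<in> P"
  have P_sub: "subgroup P G" and card_P: "card P = p ^ multiplicity p (order G)"
    using P unfolding Syl_def by auto
  have x_carrier: "x \<in> carrier G" using subgroup.mem_carrier[OF P_sub x] .
  have "x [^]\<^bsub>G\<lparr>carrier := P\<rparr>\<^esub> order (G\<lparr>carrier := P\<rparr>) = \<one>\<^bsub>G\<lparr>carrier := P\<rparr>\<^esub>"
    using group.pow_order_eq_1[OF subgroup_imp_group[OF P_sub]] x by simp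
  then have "x [^] card P = \<one>"
    by (simp add: order_def nat_pow_consistent[symmetric])
  then have "ord x dvd p ^ multiplicity p (order G)"
    using pow_eq_id[OF x_carrier] card_P by simp
  then obtain i where "ord x = p ^ i" using divides_primepow_nat[OF p] by blast
  then show "x \<in> p_elements G p" unfolding p_elements_def using x_carrier by blast
qed

lemma conjugate_eq_image: "g <# H #> inv g = (\<lambda>h. g \<otimes> h \<otimes> inv g) ` H"
  unfolding l_coset_def r_coset_def by auto

lemma subgroup_conjugate:
  assumes "subgroup H G" and "g \<in> carrier G"
  shows "subgroup (g <# H #> inv g) G"
  using subgroup_conjugation_is_surj1[of "inv g" H] assms by simp

lemma card_conjugate:
  assumes "H \<subseteq> carrier G" and "g \<in> carrier G"
  shows "card (g <# H #> inv g) = card H"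
  unfolding conjugate_eq_image
  by (rule card_image) (meson assms conjugation_is_inj inj_onI subsetD)

lemma Syl_conjugate:
  assumes "P \<in> Syl G p" and "g \<in> carrier G"
  shows "g <# P #> inv g \<in> Syl G p"
  using assms subgroup_conjugate[of P g] card_conjugate[of P g] subgroup.subset[of P G]
  unfolding Syl_def by simp

(* Sylow's conjugacy theorem: Q acts on the cosets of P, whose number is prime to p, so some
   coset P a is fixed by Q, which means a Q a^-1 \<subseteq> P. *)
lemma Syl_conjugate_subset:
  assumes fin: "finite (carrier G)" and p: "Factorial_Ring.prime p"
    and P: "P \<in> Syl G p" and Q: "Q \<in> Syl G p"
  shows "\<exists>a\<in>carrier G. a <# Q #> inv a \<subseteq> P"
proof -
  have P_sub: "subgroup P G" and Q_sub: "subgroup Q G"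
    and card_Q: "card Q = p ^ multiplicity p (order G)"
    using P Q unfolding Syl_def by auto
  interpret Q_action: group_action "G\<lparr>carrier := Q\<rparr>" "rcosets P" "\<lambda>g. \<lambda>Y\<in>rcosets P. Y #> inv g"
    using group_action.induced_action[OF rcosets_translation_action[OF P_sub] Q_sub] .
  have "finite (rcosets P)"
    using finite_subset[OF rcosets_subset_PowG[OF P_sub]] fin by simp
  then obtain Y where Y: "Y \<in> rcosets P" and fixed: "\<forall>q\<in>Q. Y #> inv q = Y"
    using Q_action.fixed_point_of_p_group[OF _ p _ Syl_index_not_dvd[OF fin p P]] card_Q
    by (force simp: order_def)
  obtain a where a: "a \<in> carrier G" and Y_eq: "Y = P #> a"
    using Y unfolding RCOSETS_def by blast
  have "a \<otimes> q \<otimes> inv a \<in> P" if q: "q \<in> Q" for q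
  proof -
    have q_carrier: "q \<in> carrier G" using subgroup.mem_carrier[OF Q_sub q] .
    have "P #> (a \<otimes> q) = P #> a"
      using fixed subgroup.m_inv_closed[OF Q_sub q] Y_eq a q_carrier P_sub
      by (metis coset_mult_assoc inv_inv subgroup.subset)
    then have "a \<otimes> q \<in> P #> a"
      using rcos_self[OF _ P_sub] a q_carrier by (metis m_closed)
    then show ?thesis
      using subgroup.rcos_module_imp[OF P_sub is_group a] by blast
  qed
  then show ?thesis
    using a unfolding conjugate_eq_image by blast
qed

lemma Syl_conjugate_eq:
  assumes fin: "finite (carrier G)" and p: "Factorial_Ring.prime p"
    and P: "P \<in> Syl G p" and Q: "Q \<in> Syl G p"
  shows "\<exists>a\<in>carrier G. Q = a <# P #> inv a"
  using Syl_conjugate_subset[OF fin p Q P] Syl_subset_eq[OF fin Syl_conjugate[OF P] Q] by blast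

lemma p_subgroup_set_mult:
  assumes fin: "finite (carrier G)" and p: "Factorial_Ring.prime p"
    and N: "N \<lhd> G" and N_p: "p_subgroup G p N" and S_p: "p_subgroup G p S"
  shows "p_subgroup G p (N <#> S)"
proof -
  interpret second_isomorphism_grp N G S
    using N S_p unfolding second_isomorphism_grp_def second_isomorphism_grp_axioms_def p_subgroup_def
    by auto
  obtain a b where "card N = p ^ a" and "card S = p ^ b"
    using N_p S_p unfolding p_subgroup_def by blast
  then have "card (N <#> S) dvd p ^ (a + b)"
    using card_set_mult_mult_card_inter by (metis dvd_triv_left power_add)
  then obtain k where "card (N <#> S) = p ^ k"
    using divides_primepow_nat[OF p] by blast
  moreover have "subgroup (N <#> S) G" by (rule normal_set_mult_subgroup)
  ultimately show ?thesis
    unfolding p_subgroup_def using finite_subset[OF subgroup.subset fin] by blast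
qed

lemma normal_p_subgroup_subset_Syl:
  assumes fin: "finite (carrier G)" and p: "Factorial_Ring.prime p"
    and N: "N \<lhd> G" and N_p: "p_subgroup G p N" and R: "R \<in> Syl G p"
  shows "N \<subseteq> R"
proof -
  have R_sub: "subgroup R G" and card_R: "card R = p ^ multiplicity p (order G)"
    using R unfolding Syl_def by auto
  interpret second_isomorphism_grp N G R
    using N R_sub unfolding second_isomorphism_grp_def second_isomorphism_grp_axioms_def by auto
  have "p_subgroup G p R"
    using R_sub card_R finite_subset[OF subgroup.subset fin] unfolding p_subgroup_def by blast
  then obtain k where NR_sub: "subgroup (N <#> R) G" and fin_NR: "finite (N <#> R)"
    and card_NR: "card (N <#> R) = p ^ k"
    using p_subgroup_set_mult[OF fin p N N_p] unfolding p_subgroup_def by blast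
  have "card (N <#> R) \<le> card R"
    using prime_power_subgroup_exponent_le[OF fin p NR_sub card_NR] card_R card_NR
      prime_gt_1_nat[OF p] by simp
  then have "R = N <#> R"
    using card_subset_eq[OF fin_NR S_contained_in_set_mult] card_mono[OF fin_NR S_contained_in_set_mult]
    by simp
  then show ?thesis using H_contained_in_set_mult by simp
qed

(* O_p is defined by THE, so we need a greatest normal p-subgroup: any \<subseteq>-maximal one is
   greatest, because the product of two normal p-subgroups is again one. *)
lemma O_p_normal_p_subgroup:
  assumes fin: "finite (carrier G)" and p: "Factorial_Ring.prime p"
  shows "O_p G p \<lhd> G" and "p_subgroup G p (O_p G p)"
proof -
  let ?C = "{M. M \<lhd> G \<and> p_subgroup G p M}"
  have "card {\<one>} = p ^ 0" by simp
  then have "{\<one>} \<in> ?C"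
    using one_is_normal normal_imp_subgroup[OF one_is_normal] unfolding p_subgroup_def by blast
  moreover have "finite ?C"
    by (rule finite_subset[of _ "Pow (carrier G)"])
      (use fin in \<open>auto simp: p_subgroup_def dest: subgroup.subset\<close>)
  ultimately obtain N where N: "N \<in> ?C" and maximal: "\<And>M. M \<in> ?C \<Longrightarrow> N \<subseteq> M \<Longrightarrow> N = M"
    using finite_has_maximal[of ?C] by blast
  have greatest: "M \<subseteq> N" if M: "M \<in> ?C" for M
  proof -
    interpret second_isomorphism_grp M G N
      using M N normal_imp_subgroup[of N]
      unfolding second_isomorphism_grp_def second_isomorphism_grp_axioms_def by blast
    have "M <#> N \<lhd> G"
      using M N normal_subgroup_set_mult_closed[of M N] by blast
    moreover have "p_subgroup G p (M <#> N)"
      using M N p_subgroup_set_mult[OF fin p, of M N] by blast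
    ultimately have "N = M <#> N"
      using maximal[of "M <#> N"] S_contained_in_set_mult by blast
    then show ?thesis using H_contained_in_set_mult by simp
  qed
  have "O_p G p = N"
    unfolding O_p_def by (rule the_equality) (use N greatest in blast)+
  then show "O_p G p \<lhd> G" and "p_subgroup G p (O_p G p)"
    using N by auto
qed

lemma cyclic_quotient_generator:
  assumes P: "subgroup P G" and N: "N \<lhd> G\<lparr>carrier := P\<rparr>"
    and cyclic: "cyclic_group (G\<lparr>carrier := P\<rparr> Mod N)"
  obtains x where "x \<in> P" and "\<And>T. subgroup T G \<Longrightarrow> N \<subseteq> T \<Longrightarrow> x \<in> T \<Longrightarrow> P \<subseteq> T"
proof -
  let ?P = "G\<lparr>carrier := P\<rparr>"
  have P_grp: "group ?P" using subgroup_imp_group[OF P] .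
  have Q_grp: "group (?P Mod N)" using normal.factorgroup_is_group[OF N] .
  have N_sub: "subgroup N G"
    using incl_subgroup[OF P normal_imp_subgroup[OF N]] .
  obtain C where C: "C \<in> carrier (?P Mod N)"
    and C_gen: "carrier (?P Mod N) = range (\<lambda>k::int. C [^]\<^bsub>?P Mod N\<^esub> k)"
    using group.cyclic_group[OF Q_grp] cyclic by blast
  obtain x where x: "x \<in> P" and C_eq: "C = N #> x"
    using C by (auto simp: FactGroup_def RCOSETS_def)
  have hom: "(\<lambda>a. N #>\<^bsub>?P\<^esub> a) \<in> hom ?P (?P Mod N)"
    using normal.r_coset_hom_Mod[OF N] .
  have decompose: "\<exists>n\<in>N. \<exists>k::int. a = n \<otimes> x [^] k" if a: "a \<in> P" for a
  proof -
    have "N #>\<^bsub>?P\<^esub> a \<in> carrier (?P Mod N)"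
      using hom a unfolding hom_def by auto
    then obtain k :: int where "N #> a = C [^]\<^bsub>?P Mod N\<^esub> k"
      using C_gen by auto
    also have "\<dots> = N #>\<^bsub>?P\<^esub> (x [^]\<^bsub>?P\<^esub> k)"
      using hom_int_pow[OF hom _ P_grp Q_grp] x C_eq by simp
    also have "\<dots> = N #> (x [^] k)"
      using int_pow_consistent[OF P x] by simp
    finally have "a \<in> N #> (x [^] k)"
      using rcos_self[OF subgroup.mem_carrier[OF P a] N_sub] by simp
    then show ?thesis unfolding r_coset_def by blast
  qed
  show thesis
  proof (rule that[OF x])
    fix T assume T: "subgroup T G" and "N \<subseteq> T" and "x \<in> T"
    then show "P \<subseteq> T"
      using decompose subgroup_int_pow_closed[OF T] subgroup.m_closed[OF T] by blast
  qed
qed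

lemma not_redundant_sylowI:
  assumes fin: "finite (carrier G)" and p: "Factorial_Ring.prime p"
    and P: "P \<in> Syl G p" and x: "x \<in> P"
    and only_P: "\<And>R. R \<in> Syl G p \<Longrightarrow> x \<in> R \<Longrightarrow> R = P"
  shows "\<not> redundant_sylow G p"
proof
  assume "redundant_sylow G p"
  then obtain S where S: "S \<subset> Syl G p" and cover: "p_elements G p \<subseteq> \<Union>S"
    unfolding redundant_sylow_def by blast
  obtain Q where Q: "Q \<in> Syl G p" and Q_not_in_S: "Q \<notin> S"
    using S by blast
  obtain g where g: "g \<in> carrier G" and Q_eq: "Q = g <# P #> inv g"
    using Syl_conjugate_eq[OF fin p P Q] by blast
  have "g \<otimes> x \<otimes> inv g \<in> Q"
    using x unfolding Q_eq conjugate_eq_image by blast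
  then obtain R where R: "R \<in> S" and gx_R: "g \<otimes> x \<otimes> inv g \<in> R"
    using cover Syl_subset_p_elements[OF p Q] by blast
  have R_Syl: "R \<in> Syl G p" using R S by blast
  have P_sub: "subgroup P G" and R_sub: "subgroup R G"
    using P R_Syl unfolding Syl_def by auto
  have x_carrier: "x \<in> carrier G" using subgroup.mem_carrier[OF P_sub x] .
  have "x = inv g \<otimes> (g \<otimes> x \<otimes> inv g) \<otimes> inv (inv g)"
    using g x_carrier by (simp add: m_assoc flip: m_assoc[of "inv g" g])
  then have "x \<in> inv g <# R #> inv (inv g)"
    using gx_R unfolding conjugate_eq_image by blast
  then have "x \<in> inv g <# R #> g" using g by simp
  then have "inv g <# R #> g = P"
    using only_P Syl_conjugate[OF R_Syl inv_closed[OF g]] g by simp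
  then have "R = Q"
    using subgroup_conjugation_is_surj0[OF g subgroup.subset[OF R_sub]] Q_eq by simp
  then show False using R Q_not_in_S by blast
qed

end

theorem corollary2p3:
  fixes G (structure) and p :: nat and P :: "'a set"
  assumes "group G" and "finite (carrier G)" and "Factorial_Ring.prime p"
    and "P \<in> Syl G p"
    and "cyclic_group ((G\<lparr>carrier := P\<rparr>) Mod (O_p G p))"
  shows "\<not> redundant_sylow G p"
proof -
  interpret group G by (rule assms(1))
  note fin = assms(2) and p = assms(3) and P = assms(4)
  have N: "O_p G p \<lhd> G" and N_p: "p_subgroup G p (O_p G p)"
    using O_p_normal_p_subgroup[OF fin p] by auto
  have P_sub: "subgroup P G" using P unfolding Syl_def by blast
  have "O_p G p \<lhd> G\<lparr>carrier := P\<rparr>"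
    using normal_restrict_supergroup[OF P_sub N normal_p_subgroup_subset_Syl[OF fin p N N_p P]] .
  then obtain x where x: "x \<in> P"
    and generates: "\<And>T. subgroup T G \<Longrightarrow> O_p G p \<subseteq> T \<Longrightarrow> x \<in> T \<Longrightarrow> P \<subseteq> T"
    using cyclic_quotient_generator[OF P_sub _ assms(5)] by blast
  show ?thesis
  proof (rule not_redundant_sylowI[OF fin p P x])
    fix R assume R: "R \<in> Syl G p" and "x \<in> R"
    then have "P \<subseteq> R"
      using generates normal_p_subgroup_subset_Syl[OF fin p N N_p R] unfolding Syl_def by blast
    then show "R = P" using Syl_subset_eq[OF fin P R] by simp
  qed
qed

end
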